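(* Let $(\Omega,\mathcal F)$ be a measurable space with $\Sigma\neq\emptyset$, and let $v:\mathcal F\to\mathbb R$ be a non-decreasing, continuous, submodular set function with $v(\emptyset)=0$. Then for every bounded measurable $f:\Omega\to\mathbb R$, $$v(f)=\sup_{\mathcal I\in\Sigma}\int_\Omega f(\omega)\,\mu_{v,\mathcal I}(d\omega).$$
   Context: $\Sigma$ denotes the set of all classes $\mathcal I\subset\mathcal F$ that are chains (totally ordered by inclusion), contain $\emptyset$ and $\Omega$, and generate $\mathcal F$ as a $\sigma$-algebra. $v$ is non-decreasing if $v(A)\le v(B)$ for $A\subset B$; submodular if $v(A)+v(B)\ge v(A\cup B)+v(A\cap B)$. For $\mathcal I\in\Sigma$ let $\mathcal J$ be the algebra generated by $\mathcal I$, whose elements are the sets $\bigcup_{i=1}^n (C_i\cap D_i^c)$ with $C_1\supset D_1\supset\cdots\supset C_n\supset D_n$ in $\mathcal I$; define $\mu_{v,\mathcal I}(\bigcup_{i=1}^n (C_i\cap D_i^c))=\sum_{i=1}^n(v(C_i)-v(D_i))$. $v$ is continuous if for every $\mathcal I\in\Sigma$ this $\mu_{v,\mathcal I}$ is $\sigma$-additive on $\mathcal J$; it then extends uniquely to a measure $\mu_{v,\mathcal I}$ on $\mathcal F$. The Choquet integral is $v(f)=\lim_{y\to-\infty}\big(y\,v(\Omega)+\int_y^\infty v(\{\omega: f(\omega)>z\})\,dz\big)$. *)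

theory Defs
  imports "HOL-Analysis.Analysis"
begin

definition Sigma_cls :: "'a measure \<Rightarrow> 'a set set set" where
  "Sigma_cls M = {I. I \<subseteq> sets M \<and> (\<forall>A\<in>I. \<forall>B\<in>I. A \<subseteq> B \<or> B \<subseteq> A)
      \<and> {} \<in> I \<and> space M \<in> I \<and> sigma_sets (space M) I = sets M}"

definition chain_rep :: "'a set set \<Rightarrow> nat \<Rightarrow> (nat \<Rightarrow> 'a set) \<Rightarrow> (nat \<Rightarrow> 'a set) \<Rightarrow> bool" where
  "chain_rep I n C D \<longleftrightarrow> (\<forall>i<n. C i \<in> I \<and> D i \<in> I \<and> D i \<subseteq> C i)
      \<and> (\<forall>i. Suc i < n \<longrightarrow> C (Suc i) \<subseteq> D i)"

definition J_alg :: "'a set set \<Rightarrow> 'a set set" where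
  "J_alg I = {(\<Union>i<n. C i - D i) | n C D. chain_rep I n C D}"

text \<open>The set function mu_{v,I} on J (well-definedness is asserted by the paper).\<close>
definition mu_pre :: "('a set \<Rightarrow> real) \<Rightarrow> 'a set set \<Rightarrow> 'a set \<Rightarrow> real" where
  "mu_pre v I A = (SOME r. \<exists>n C D. chain_rep I n C D \<and> A = (\<Union>i<n. C i - D i)
        \<and> r = (\<Sum>i<n. v (C i) - v (D i)))"

definition continuous_sf :: "'a measure \<Rightarrow> ('a set \<Rightarrow> real) \<Rightarrow> bool" where
  "continuous_sf M v \<longleftrightarrow> (\<forall>I\<in>Sigma_cls M. \<forall>A :: nat \<Rightarrow> 'a set.
      range A \<subseteq> J_alg I \<longrightarrow> disjoint_family A \<longrightarrow> (\<Union>k. A k) \<in> J_alg I \<longrightarrow>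
      (\<lambda>k. mu_pre v I (A k)) sums mu_pre v I (\<Union>k. A k))"

definition mu_ext :: "'a measure \<Rightarrow> ('a set \<Rightarrow> real) \<Rightarrow> 'a set set \<Rightarrow> 'a measure" where
  "mu_ext M v I = (THE m. sets m = sets M \<and>
      (\<forall>A\<in>J_alg I. emeasure m A = ennreal (mu_pre v I A)))"

definition choquet :: "'a measure \<Rightarrow> ('a set \<Rightarrow> real) \<Rightarrow> ('a \<Rightarrow> real) \<Rightarrow> real" where
  "choquet M v f = Lim at_bot (\<lambda>y. y * v (space M) +
      (LBINT z:{y..}. v {\<omega>\<in>space M. f \<omega> > z}))"

end

theory Submission
  imports Defs
begin

(*
  For a chain I in Sigma, the measure mu_{v,I} agrees with v on I and is dominated by v on
  all of F: on finite disjoint unions of differences of members of I this is an induction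
  using submodularity, and the monotone class theorem extends it to F, because continuity of v
  (via the sigma-additivity of mu_{v,I'} for a chain I' through a monotone sequence) makes v
  continuous along monotone sequences.  Both integrals have a layer cake representation with
  the same total mass v(Omega), so the integral of f against mu_{v,I} is at most v(f).
  Conversely, for d > 0 refine a chain so that it contains all level sets {f > kd}, k an
  integer.  Then v{f > z + d} <= mu_{v,I}{f > z} for all z, hence v(f) - d v(Omega) is at most
  the integral of f against mu_{v,I}.
*)

lemma chain_subset_Int: "chain\<^sub>\<subseteq> I \<Longrightarrow> X \<in> I \<Longrightarrow> Y \<in> I \<Longrightarrow> X \<inter> Y \<in> I"
  unfolding chain_subset_def by (metis Int_absorb1 Int_absorb2)

lemma chain_subset_Un: "chain\<^sub>\<subseteq> I \<Longrightarrow> X \<in> I \<Longrightarrow> Y \<in> I \<Longrightarrow> X \<union> Y \<in> I"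
  unfolding chain_subset_def by (metis Un_absorb1 Un_absorb2)

lemma Sigma_clsD:
  assumes "I \<in> Sigma_cls M"
  shows "I \<subseteq> sets M" "chain\<^sub>\<subseteq> I" "{} \<in> I" "space M \<in> I" "sigma_sets (space M) I = sets M"
  using assms unfolding Sigma_cls_def chain_subset_def by blast+

lemma Sigma_clsI:
  assumes "I \<subseteq> sets M" "chain\<^sub>\<subseteq> I" "{} \<in> I" "space M \<in> I" "sigma_sets (space M) I = sets M"
  shows "I \<in> Sigma_cls M"
  using assms unfolding Sigma_cls_def chain_subset_def by blast

lemma chain_rep_nested:
  assumes rep: "chain_rep I n C D" and "j < i" "i < n"
  shows "C i \<subseteq> D j"
proof -
  have step: "C (Suc k) \<subseteq> C k" if "Suc k < n" for k
    using rep that unfolding chain_rep_def by (meson Suc_lessD order_trans)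
  have "k < n \<longrightarrow> C k \<subseteq> C (Suc j)" if "Suc j \<le> k" for k
    using that by (induction k rule: dec_induct) (use step in force)+
  moreover have "C (Suc j) \<subseteq> D j"
    using rep \<open>j < i\<close> \<open>i < n\<close> unfolding chain_rep_def by auto
  ultimately show ?thesis
    using \<open>j < i\<close> \<open>i < n\<close> by (meson Suc_leI order_trans)
qed

lemma chain_rep_disjoint:
  assumes "chain_rep I n C D"
  shows "disjoint_family_on (\<lambda>i. C i - D i) {..<n}"
  unfolding disjoint_family_on_def
proof (intro ballI impI)
  fix i j assume "i \<in> {..<n}" "j \<in> {..<n}" "i \<noteq> j"
  then consider "j < i" "i < n" | "i < j" "j < n" by fastforce
  then show "(C i - D i) \<inter> (C j - D j) = {}"
    by cases (use chain_rep_nested[OF assms] in blast)+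
qed

lemma indicator_chain_rep:
  fixes \<omega> :: 'a
  assumes "chain_rep I n C D"
  shows "indicator (\<Union>i<n. C i - D i) \<omega> = (\<Sum>i<n. indicator (C i) \<omega> - indicator (D i) \<omega> :: real)"
proof -
  have "indicator (\<Union>i<n. C i - D i) \<omega> = (\<Sum>i<n. indicator (C i - D i) \<omega> :: real)"
    using chain_rep_disjoint[OF assms] by (intro indicator_UN_disjoint) auto
  also have "\<dots> = (\<Sum>i<n. indicator (C i) \<omega> - indicator (D i) \<omega>)"
    using assms unfolding chain_rep_def by (intro sum.cong) (auto simp: indicator_def)
  finally show ?thesis .
qed

(* Evaluating the relation at a point of the largest set that lies in no smaller one isolates
   the coefficient of the largest set. *)
lemma chain_indicators_independent:
  fixes b :: "'a set \<Rightarrow> real"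
  assumes "finite F" "chain\<^sub>\<subseteq> F" "\<And>\<omega>. (\<Sum>S\<in>F. b S * indicator S \<omega>) = 0" "S \<in> F" "S \<noteq> {}"
  shows "b S = 0"
  using assms
proof (induction F arbitrary: S rule: finite_psubset_induct)
  case (psubset F)
  define m where "m = \<Union>F"
  define F' where "F' = F - {m}"
  have m: "m \<in> F"
    unfolding m_def using psubset.prems psubset.hyps
    by (intro Union_in_chain) (auto simp: chain_subset_alt_def)
  have "\<Union>F' \<noteq> m"
  proof (cases "F' = {}")
    case True
    then show ?thesis using psubset.prems unfolding m_def by auto
  next
    case False
    have "chain\<^sub>\<subseteq> F'" using psubset.prems(1) unfolding F'_def chain_subset_def by blast
    then have "\<Union>F' \<in> F'"
      using False psubset.hyps by (intro Union_in_chain) (auto simp: F'_def chain_subset_alt_def)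
    then show ?thesis unfolding F'_def by blast
  qed
  moreover have "\<Union>F' \<subseteq> m" unfolding F'_def m_def by blast
  ultimately obtain \<omega> where \<omega>: "\<omega> \<in> m" "\<omega> \<notin> \<Union>F'" by blast
  have split: "(\<Sum>S\<in>F. b S * indicator S \<omega>') = b m * indicator m \<omega>' + (\<Sum>S\<in>F'. b S * indicator S \<omega>')"
    for \<omega>'
    unfolding F'_def by (rule sum.remove[OF psubset.hyps m])
  have "(\<Sum>S\<in>F'. b S * indicator S \<omega>) = 0"
    using \<omega>(2) by (intro sum.neutral) auto
  then have bm: "b m = 0"
    using split[of \<omega>] psubset.prems(2) \<omega>(1) by simp
  show ?case
  proof (cases "S = m")
    case False
    have "F' \<subset> F" "chain\<^sub>\<subseteq> F'" "S \<in> F'"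
      using m False psubset.prems(1,3) unfolding F'_def chain_subset_def by blast+
    moreover have "(\<Sum>S\<in>F'. b S * indicator S \<omega>') = 0" for \<omega>'
      using split[of \<omega>'] psubset.prems(2) bm by simp
    ultimately show ?thesis
      using psubset.IH psubset.prems(4) by blast
  qed (use bm in simp)
qed

lemma chain_indicator_relation_transfer:
  fixes a :: "'i \<Rightarrow> real" and v :: "'a set \<Rightarrow> real"
  assumes "finite K" "chain\<^sub>\<subseteq> (G ` K)" "v {} = 0"
    and "\<And>\<omega>. (\<Sum>k\<in>K. a k * indicator (G k) \<omega>) = 0"
  shows "(\<Sum>k\<in>K. a k * v (G k)) = 0"
proof -
  define b where "b S = (\<Sum>k\<in>{k\<in>K. G k = S}. a k)" for S
  have regroup: "(\<Sum>k\<in>K. a k * h (G k)) = (\<Sum>S\<in>G ` K. b S * h S)" for h :: "'a set \<Rightarrow> real"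
    unfolding b_def sum_distrib_right
    by (subst sum.image_gen[OF assms(1)]) (auto intro!: sum.cong)
  have "b S * v S = 0" if "S \<in> G ` K" for S
  proof (cases "S = {}")
    case False
    have "(\<Sum>S\<in>G ` K. b S * indicator S \<omega>) = 0" for \<omega>
      using assms(4)[of \<omega>] regroup[of "\<lambda>S. indicator S \<omega>"] by simp
    then have "b S = 0"
      using chain_indicators_independent[of "G ` K" b S] assms(1,2) that False by blast
    then show ?thesis by simp
  qed (use assms(3) in simp)
  then show ?thesis
    unfolding regroup by (intro sum.neutral) blast
qed

lemma chain_rep_sum_unique:
  assumes chain: "chain\<^sub>\<subseteq> I" and v0: "v {} = (0::real)"
    and rep: "chain_rep I n C D" and rep': "chain_rep I n' C' D'"
    and eq: "(\<Union>i<n. C i - D i) = (\<Union>i<n'. C' i - D' i)"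
  shows "(\<Sum>i<n. v (C i) - v (D i)) = (\<Sum>i<n'. v (C' i) - v (D' i))"
proof -
  define K where "K = ({..<n} <+> {..<n}) <+> ({..<n'} <+> {..<n'})"
  define G where "G = case_sum (case_sum C D) (case_sum C' D')"
  define a :: "(nat + nat) + (nat + nat) \<Rightarrow> real"
    where "a = case_sum (case_sum (\<lambda>_. 1) (\<lambda>_. -1)) (case_sum (\<lambda>_. -1) (\<lambda>_. 1))"
  have expand: "(\<Sum>k\<in>K. a k * h (G k))
      = (\<Sum>i<n. h (C i) - h (D i)) - (\<Sum>i<n'. h (C' i) - h (D' i))" for h :: "'a set \<Rightarrow> real"
    by (simp add: K_def G_def a_def sum.Plus sum_subtractf sum_negf)
  have "G ` K \<subseteq> I"
    using rep rep' by (auto simp: K_def G_def chain_rep_def)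
  then have chain_GK: "chain\<^sub>\<subseteq> (G ` K)"
    using chain unfolding chain_subset_def by blast
  have relation: "(\<Sum>k\<in>K. a k * indicator (G k) \<omega>) = 0" for \<omega>
  proof -
    have "(\<Sum>k\<in>K. a k * indicator (G k) \<omega>)
        = (\<Sum>i<n. indicator (C i) \<omega> - indicator (D i) \<omega>) - (\<Sum>i<n'. indicator (C' i) \<omega> - indicator (D' i) \<omega>)"
      by (rule expand)
    also have "\<dots> = indicator (\<Union>i<n. C i - D i) \<omega> - indicator (\<Union>i<n'. C' i - D' i) \<omega>"
      by (simp only: indicator_chain_rep[OF rep] indicator_chain_rep[OF rep'])
    finally show ?thesis
      by (simp only: eq diff_self)
  qed
  have "finite K"
    by (simp add: K_def)
  then have "(\<Sum>k\<in>K. a k * v (G k)) = 0"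
    using chain_GK v0 relation by (rule chain_indicator_relation_transfer)
  then show ?thesis
    using expand[of v] by simp
qed

lemma mu_pre_chain_rep:
  assumes "chain\<^sub>\<subseteq> I" "v {} = (0::real)" "chain_rep I n C D"
  shows "mu_pre v I (\<Union>i<n. C i - D i) = (\<Sum>i<n. v (C i) - v (D i))"
proof -
  let ?P = "\<lambda>r. \<exists>n' C' D'. chain_rep I n' C' D' \<and> (\<Union>i<n. C i - D i) = (\<Union>i<n'. C' i - D' i)
    \<and> r = (\<Sum>i<n'. v (C' i) - v (D' i))"
  have "?P (\<Sum>i<n. v (C i) - v (D i))"
    using assms(3) by blast
  then have "?P (SOME r. ?P r)"
    by (rule someI)
  then obtain n' C' D' where rep': "chain_rep I n' C' D'"
    and eq: "(\<Union>i<n. C i - D i) = (\<Union>i<n'. C' i - D' i)"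
    and some: "(SOME r. ?P r) = (\<Sum>i<n'. v (C' i) - v (D' i))"
    by blast
  have "mu_pre v I (\<Union>i<n. C i - D i) = (SOME r. ?P r)"
    unfolding mu_pre_def by simp
  also have "\<dots> = (\<Sum>i<n. v (C i) - v (D i))"
    unfolding some using chain_rep_sum_unique[where v=v, OF assms rep' eq] by simp
  finally show ?thesis .
qed

lemma chain_rep_Diff:
  assumes "chain\<^sub>\<subseteq> I" "X \<in> I" "Y \<in> I"
  shows "chain_rep I 1 (\<lambda>_. X) (\<lambda>_. X \<inter> Y)"
  using assms chain_subset_Int[OF assms] unfolding chain_rep_def by auto

lemma Diff_in_J_alg:
  assumes "chain\<^sub>\<subseteq> I" "X \<in> I" "Y \<in> I"
  shows "X - Y \<in> J_alg I"
proof -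
  have "X - Y = (\<Union>i<(1::nat). (\<lambda>_. X) i - (\<lambda>_. X \<inter> Y) i) \<and> chain_rep I 1 (\<lambda>_. X) (\<lambda>_. X \<inter> Y)"
    using chain_rep_Diff[OF assms] by auto
  then show ?thesis
    unfolding J_alg_def by (intro CollectI exI)
qed

lemma mu_pre_Diff:
  assumes "chain\<^sub>\<subseteq> I" "v {} = (0::real)" "X \<in> I" "Y \<in> I"
  shows "mu_pre v I (X - Y) = v X - v (X \<inter> Y)"
proof -
  have "(\<Union>i<(1::nat). X - X \<inter> Y) = X - Y"
    by auto
  then show ?thesis
    using mu_pre_chain_rep[where v=v, OF assms(1,2) chain_rep_Diff[OF assms(1,3,4)]] by simp
qed

definition chain_diffs :: "'a set set \<Rightarrow> 'a set set" where
  "chain_diffs I = {X - Y | X Y. X \<in> I \<and> Y \<in> I}"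

lemma chain_diffs_subset_J_alg: "chain\<^sub>\<subseteq> I \<Longrightarrow> chain_diffs I \<subseteq> J_alg I"
  unfolding chain_diffs_def using Diff_in_J_alg by blast

lemma subset_chain_diffs: "{} \<in> I \<Longrightarrow> I \<subseteq> chain_diffs I"
  unfolding chain_diffs_def by force

lemma chain_diffs_subset_sets: "I \<subseteq> sets M \<Longrightarrow> chain_diffs I \<subseteq> sets M"
  unfolding chain_diffs_def by blast

lemma chain_diffs_normalize:
  assumes "chain\<^sub>\<subseteq> I" "s \<in> chain_diffs I"
  shows "\<exists>X Y. X \<in> I \<and> Y \<in> I \<and> Y \<subseteq> X \<and> s = X - Y"
proof -
  obtain X Y where "X \<in> I" "Y \<in> I" "s = X - Y"
    using assms(2) unfolding chain_diffs_def by blast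
  moreover have "X \<inter> Y \<in> I"
    using chain_subset_Int[OF assms(1) \<open>X \<in> I\<close> \<open>Y \<in> I\<close>] .
  ultimately show ?thesis
    by (intro exI[of _ X] exI[of _ "X \<inter> Y"]) auto
qed

lemma semiring_of_sets_chain_diffs:
  assumes chain: "chain\<^sub>\<subseteq> I" and "I \<subseteq> Pow \<Omega>" "{} \<in> I"
  shows "semiring_of_sets \<Omega> (chain_diffs I)"
proof
  show "chain_diffs I \<subseteq> Pow \<Omega>" "{} \<in> chain_diffs I"
    using assms unfolding chain_diffs_def by blast+
next
  fix a b assume "a \<in> chain_diffs I" "b \<in> chain_diffs I"
  then obtain X Y X' Y' where XY: "X \<in> I" "Y \<in> I" "a = X - Y" "X' \<in> I" "Y' \<in> I" "b = X' - Y'"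
    unfolding chain_diffs_def by blast
  have closed: "X \<inter> X' \<in> I" "Y \<union> Y' \<in> I" "Y \<union> X' \<in> I" "X \<inter> (X' \<inter> Y') \<in> I"
    using XY chain_subset_Int[OF chain] chain_subset_Un[OF chain] by meson+
  have "a \<inter> b = (X \<inter> X') - (Y \<union> Y')"
    using XY by auto
  then show "a \<inter> b \<in> chain_diffs I"
    unfolding chain_diffs_def using closed(1,2) by blast
  define c1 where "c1 = X - (Y \<union> X')"
  define c2 where "c2 = (X \<inter> (X' \<inter> Y')) - Y"
  have "{c1, c2} \<subseteq> chain_diffs I"
    unfolding chain_diffs_def c1_def c2_def using XY(1,2) closed(3,4) by blast
  moreover have "a - b = \<Union>{c1, c2}"
    using XY unfolding c1_def c2_def by auto
  moreover have "disjoint {c1, c2}"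
    unfolding disjoint_def c1_def c2_def by auto
  ultimately show "\<exists>C\<subseteq>chain_diffs I. finite C \<and> disjoint C \<and> a - b = \<Union>C"
    by blast
qed

lemma semiring_of_sets_chain_diffs_Sigma_cls:
  assumes "I \<in> Sigma_cls M"
  shows "semiring_of_sets (space M) (chain_diffs I)"
proof (rule semiring_of_sets_chain_diffs)
  show "I \<subseteq> Pow (space M)"
    using Sigma_clsD(1)[OF assms] sets.sets_into_space by blast
qed (use Sigma_clsD(2,3)[OF assms] in auto)

lemma chain_diffs_peel:
  assumes chain: "chain\<^sub>\<subseteq> I" and C: "finite C" "C \<noteq> {}" "C \<subseteq> chain_diffs I" "disjoint C"
  obtains s X Y where "s \<in> C" "X \<in> I" "Y \<in> I" "Y \<subseteq> X" "s = X - Y" "\<Union>(C - {s}) \<subseteq> Y"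
proof -
  have "\<exists>X Y. X \<in> I \<and> Y \<in> I \<and> Y \<subseteq> X \<and> s = X - Y" if "s \<in> C" for s
    using chain_diffs_normalize[OF chain] C(3) that by blast
  then obtain X Y where XY: "\<And>s. s \<in> C \<Longrightarrow> X s \<in> I \<and> Y s \<in> I \<and> Y s \<subseteq> X s \<and> s = X s - Y s"
    by metis
  have "chain\<^sub>\<subseteq> (X ` C)"
    using chain XY unfolding chain_subset_def by blast
  then have "\<Union>(X ` C) \<in> X ` C"
    using Union_in_chain[of "X ` C" UNIV] C(1,2) by (simp add: chain_subset_alt_def)
  then obtain s where s: "s \<in> C" and X_max: "\<And>s'. s' \<in> C \<Longrightarrow> X s' \<subseteq> X s"
    by blast
  have "s' \<subseteq> Y s" if "s' \<in> C - {s}" for s'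
  proof -
    have "s' \<subseteq> X s"
      using XY[of s'] X_max[of s'] that by blast
    moreover have "s' \<inter> s = {}"
      using C(4) s that unfolding disjoint_def by blast
    ultimately show ?thesis
      using XY[OF s] by blast
  qed
  then show ?thesis
    using that[of s "X s" "Y s"] s XY[OF s] by blast
qed

lemma measure_eqI_Sigma_cls:
  assumes I: "I \<in> Sigma_cls M" and sets: "sets m = sets M" "sets m' = sets M"
    and eq: "\<And>X. X \<in> I \<Longrightarrow> emeasure m X = emeasure m' X" and fin: "emeasure m (space M) \<noteq> \<infinity>"
  shows "m = m'"
proof (rule measure_eqI_generator_eq[where E=I and A="\<lambda>_. space M"])
  show "Int_stable I"
    unfolding Int_stable_def using chain_subset_Int[OF Sigma_clsD(2)[OF I]] by blast
  show "I \<subseteq> Pow (space M)"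
    using Sigma_clsD(1)[OF I] sets.sets_into_space by blast
  show "sets m = sigma_sets (space M) I" "sets m' = sigma_sets (space M) I"
    using sets Sigma_clsD(5)[OF I] by simp_all
  show "range (\<lambda>_. space M) \<subseteq> I"
    using Sigma_clsD(4)[OF I] by auto
qed (use eq fin in auto)

(* P is a family of mutually separated bands U - L covering the space; a copy of the chain I is
   inserted into every band. *)
definition refine_bands :: "('a set \<times> 'a set) set \<Rightarrow> 'a set set \<Rightarrow> 'a set set" where
  "refine_bands P I = {L \<union> (U \<inter> C) | L U C. (L, U) \<in> P \<and> C \<in> I}"

lemma refine_bandsI: "(L, U) \<in> P \<Longrightarrow> C \<in> I \<Longrightarrow> L \<union> (U \<inter> C) \<in> refine_bands P I"
  unfolding refine_bands_def by blast

lemma refine_bands_subset_sets: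
  assumes "P \<subseteq> sets M \<times> sets M" "I \<subseteq> sets M"
  shows "refine_bands P I \<subseteq> sets M"
  using assms unfolding refine_bands_def by blast

lemma chain_refine_bands:
  assumes chain: "chain\<^sub>\<subseteq> I"
    and ordered: "\<And>L U. (L, U) \<in> P \<Longrightarrow> L \<subseteq> U"
    and separated: "\<And>L U L' U'. (L, U) \<in> P \<Longrightarrow> (L', U') \<in> P \<Longrightarrow> (L, U) \<noteq> (L', U') \<Longrightarrow>
      U \<subseteq> L' \<or> U' \<subseteq> L"
  shows "chain\<^sub>\<subseteq> (refine_bands P I)"
  unfolding chain_subset_def
proof (intro ballI)
  fix x y assume "x \<in> refine_bands P I" "y \<in> refine_bands P I"
  then obtain L U C L' U' C' where LU: "(L, U) \<in> P" "C \<in> I" "x = L \<union> (U \<inter> C)"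
    and LU': "(L', U') \<in> P" "C' \<in> I" "y = L' \<union> (U' \<inter> C')"
    unfolding refine_bands_def by blast
  show "x \<subseteq> y \<or> y \<subseteq> x"
  proof (cases "(L, U) = (L', U')")
    case True
    have "C \<subseteq> C' \<or> C' \<subseteq> C"
      using chain LU(2) LU'(2) unfolding chain_subset_def by blast
    then show ?thesis
      using True LU(3) LU'(3) by auto
  next
    case False
    have "L \<subseteq> x" "x \<subseteq> U" "L' \<subseteq> y" "y \<subseteq> U'"
      using LU(3) LU'(3) ordered[OF LU(1)] ordered[OF LU'(1)] by auto
    then show ?thesis
      using separated[OF LU(1) LU'(1) False] by blast
  qed
qed

lemma in_sigma_sets_refine_bands:
  assumes "refine_bands P I \<subseteq> Pow \<Omega>" "countable P" "{} \<in> I"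
    and C: "C \<in> I" "C \<subseteq> (\<Union>(L, U)\<in>P. U - L)"
  shows "C \<in> sigma_sets \<Omega> (refine_bands P I)"
proof -
  interpret sigma_algebra \<Omega> "sigma_sets \<Omega> (refine_bands P I)"
    using assms(1) by (rule sigma_algebra_sigma_sets)
  have "(L \<union> (U \<inter> C)) - (L \<union> (U \<inter> {})) \<in> sigma_sets \<Omega> (refine_bands P I)" if "(L, U) \<in> P" for L U
    using that C(1) \<open>{} \<in> I\<close> by (intro Diff sigma_sets.Basic refine_bandsI)
  then have "(\<Union>(L, U)\<in>P. (L \<union> (U \<inter> C)) - (L \<union> (U \<inter> {}))) \<in> sigma_sets \<Omega> (refine_bands P I)"
    by (intro countable_UN''[OF \<open>countable P\<close>]) auto
  moreover have "(\<Union>(L, U)\<in>P. (L \<union> (U \<inter> C)) - (L \<union> (U \<inter> {}))) = C"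
    using C(2) by blast
  ultimately show ?thesis
    by simp
qed

lemma Sigma_cls_refine:
  assumes I: "I \<in> Sigma_cls M" and P: "countable P" "P \<subseteq> sets M \<times> sets M"
    and ordered: "\<And>L U. (L, U) \<in> P \<Longrightarrow> L \<subseteq> U"
    and separated: "\<And>L U L' U'. (L, U) \<in> P \<Longrightarrow> (L', U') \<in> P \<Longrightarrow> (L, U) \<noteq> (L', U') \<Longrightarrow>
      U \<subseteq> L' \<or> U' \<subseteq> L"
    and cover: "space M \<subseteq> (\<Union>(L, U)\<in>P. U - L)"
  shows "{{}, space M} \<union> refine_bands P I \<in> Sigma_cls M"
proof (rule Sigma_clsI)
  have sets: "refine_bands P I \<subseteq> sets M"
    using P(2) Sigma_clsD(1)[OF I] by (rule refine_bands_subset_sets)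
  then have Pow: "refine_bands P I \<subseteq> Pow (space M)"
    using sets.sets_into_space by blast
  then show "chain\<^sub>\<subseteq> ({{}, space M} \<union> refine_bands P I)"
    using chain_refine_bands[OF Sigma_clsD(2)[OF I] ordered separated]
    unfolding chain_subset_def by blast
  show "{{}, space M} \<union> refine_bands P I \<subseteq> sets M"
    using sets sets.empty_sets[of M] sets.top[of M] by blast
  have "C \<in> sigma_sets (space M) (refine_bands P I)" if "C \<in> I" for C
  proof (rule in_sigma_sets_refine_bands[OF Pow P(1) Sigma_clsD(3)[OF I] that])
    have "C \<subseteq> space M"
      using that Sigma_clsD(1)[OF I] by (meson subsetD sets.sets_into_space)
    then show "C \<subseteq> (\<Union>(L, U)\<in>P. U - L)"
      using cover by (rule order_trans)
  qed
  then have "sigma_sets (space M) I \<subseteq> sigma_sets (space M) (refine_bands P I)"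
    by (intro sigma_sets_mono) auto
  also have "\<dots> \<subseteq> sigma_sets (space M) ({{}, space M} \<union> refine_bands P I)"
    by (rule sigma_sets_mono') blast
  moreover have "sigma_sets (space M) ({{}, space M} \<union> refine_bands P I) \<subseteq> sets M"
    using sets by (intro sets.sigma_sets_subset) auto
  ultimately show "sigma_sets (space M) ({{}, space M} \<union> refine_bands P I) = sets M"
    using Sigma_clsD(5)[OF I] by blast
qed simp_all

lemma antimono_int_band:
  fixes T :: "int \<Rightarrow> 'a set"
  assumes "antimono T" "\<omega> \<in> T k" "\<omega> \<notin> T l"
  obtains j where "\<omega> \<in> T j" "\<omega> \<notin> T (j + 1)"
proof -
  have "k \<le> l"
  proof (rule ccontr)
    assume "\<not> k \<le> l"
    then have "T k \<subseteq> T l"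
      using assms(1) by (simp add: antimono_def)
    then show False
      using assms(2,3) by blast
  qed
  moreover have "\<omega> \<notin> T l \<longrightarrow> (\<exists>j. \<omega> \<in> T j \<and> \<omega> \<notin> T (j + 1))" if "k \<le> l" for l
    using that by (induction rule: int_ge_induct) (use assms(2) in blast)+
  ultimately show ?thesis
    using assms(3) that by blast
qed

lemma antimono_int_bands:
  fixes T :: "int \<Rightarrow> 'a set"
  assumes T: "antimono T" "\<And>k. T k \<subseteq> \<Omega>"
  defines "P \<equiv> {(\<Union>k. T k, \<Omega>), ({}, \<Inter>k. T k)} \<union> range (\<lambda>k. (T (k + 1), T k))"
  shows "\<And>L U. (L, U) \<in> P \<Longrightarrow> L \<subseteq> U"
    and "\<And>L U L' U'. (L, U) \<in> P \<Longrightarrow> (L', U') \<in> P \<Longrightarrow> (L, U) \<noteq> (L', U') \<Longrightarrow> U \<subseteq> L' \<or> U' \<subseteq> L"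
    and "\<Omega> \<subseteq> (\<Union>(L, U)\<in>P. U - L)"
proof -
  let ?U = "\<Union>k. T k" and ?L = "\<Inter>k. T k"
  have T_le: "T l \<subseteq> T k" if "k \<le> l" for k l
    using T(1) that by (simp add: antimono_def)
  have T_Suc: "T (k + 1) \<subseteq> T k" for k
    using T_le by simp
  show "L \<subseteq> U" if "(L, U) \<in> P" for L U
    using that T_Suc T(2) unfolding P_def by blast
  show "U \<subseteq> L' \<or> U' \<subseteq> L"
    if "(L, U) \<in> P" "(L', U') \<in> P" "(L, U) \<noteq> (L', U')" for L U L' U'
  proof -
    from that(1,2) consider (steps) k l where "(L, U) = (T (k + 1), T k)" "(L', U') = (T (l + 1), T l)"
      | (ends) "(L, U) \<in> {(?U, \<Omega>), ({}, ?L)} \<or> (L', U') \<in> {(?U, \<Omega>), ({}, ?L)}"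
      unfolding P_def by blast
    then show ?thesis
    proof cases
      case (steps k l)
      then have "k + 1 \<le> l \<or> l + 1 \<le> k"
        using that(3) by (cases "k = l") auto
      then show ?thesis
        using steps T_le by auto
    next
      case ends
      have "T k \<subseteq> ?U" "?L \<subseteq> T k" for k
        by blast+
      with ends show ?thesis
        using that T(2) unfolding P_def by auto
    qed
  qed
  show "\<Omega> \<subseteq> (\<Union>(L, U)\<in>P. U - L)"
  proof
    fix \<omega> assume "\<omega> \<in> \<Omega>"
    then consider "\<omega> \<notin> ?U" | "\<omega> \<in> ?L" | j where "\<omega> \<in> T j" "\<omega> \<notin> T (j + 1)"
      using antimono_int_band[OF T(1)] by blast
    then show "\<omega> \<in> (\<Union>(L, U)\<in>P. U - L)"
      by cases (use \<open>\<omega> \<in> \<Omega>\<close> in \<open>auto simp: P_def\<close>)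
  qed
qed

lemma Sigma_cls_insert_antimono:
  fixes T :: "int \<Rightarrow> 'a set"
  assumes I: "I \<in> Sigma_cls M" and T: "antimono T" "\<And>k. T k \<in> sets M"
  obtains I' where "I' \<in> Sigma_cls M" "\<And>k. T k \<in> I'" "(\<Union>k. T k) \<in> I'" "(\<Inter>k. T k) \<in> I'"
proof -
  let ?U = "\<Union>k. T k" and ?L = "\<Inter>k. T k"
  define P where "P = {(?U, space M), ({}, ?L)} \<union> range (\<lambda>k. (T (k + 1), T k))"
  have T_space: "T k \<subseteq> space M" for k
    using T(2) by (rule sets.sets_into_space)
  note bands = antimono_int_bands[OF T(1) T_space, folded P_def]
  have "?U \<in> sets M" "?L \<in> sets M"
    using T(2) by auto
  then have "P \<subseteq> sets M \<times> sets M"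
    unfolding P_def using T(2) by auto
  then have "{{}, space M} \<union> refine_bands P I \<in> Sigma_cls M"
    using I bands by (intro Sigma_cls_refine) (auto simp: P_def)
  moreover have "T k \<in> refine_bands P I" for k
  proof -
    have "T (k + 1) \<union> (T k \<inter> space M) \<in> refine_bands P I"
      by (rule refine_bandsI) (auto simp: P_def Sigma_clsD(4)[OF I])
    moreover have "T (k + 1) \<union> (T k \<inter> space M) = T k"
      using bands(1)[of "T (k + 1)" "T k"] T_space[of k] unfolding P_def by blast
    ultimately show ?thesis
      by (simp only:)
  qed
  moreover have "?U \<in> refine_bands P I" "?L \<in> refine_bands P I"
  proof -
    have "?U \<union> (space M \<inter> {}) \<in> refine_bands P I" "{} \<union> (?L \<inter> space M) \<in> refine_bands P I"
      by (rule refine_bandsI; simp add: P_def Sigma_clsD(3,4)[OF I])+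
    moreover have "?U \<union> (space M \<inter> {}) = ?U" "{} \<union> (?L \<inter> space M) = ?L"
      using T_space[of 0] by blast+
    ultimately show "?U \<in> refine_bands P I" "?L \<in> refine_bands P I"
      by (simp_all only:)
  qed
  ultimately show ?thesis
    using that[of "{{}, space M} \<union> refine_bands P I"] by blast
qed

lemma Sigma_cls_with_level_grid:
  fixes f :: "'a \<Rightarrow> real"
  assumes "Sigma_cls M \<noteq> {}" "f \<in> borel_measurable M" "0 < d"
  obtains I where "I \<in> Sigma_cls M" "\<And>k::int. {\<omega>\<in>space M. of_int k * d < f \<omega>} \<in> I"
proof -
  obtain I0 where I0: "I0 \<in> Sigma_cls M"
    using assms(1) by blast
  have "of_int k * d \<le> of_int l * d" if "k \<le> l" for k l :: int
    using assms(3) that by (simp add: mult_right_mono)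
  then have "antimono (\<lambda>k::int. {\<omega>\<in>space M. of_int k * d < f \<omega>})"
    unfolding antimono_def by (auto intro: le_less_trans)
  moreover have "{\<omega>\<in>space M. of_int k * d < f \<omega>} \<in> sets M" for k :: int
    using assms(2) by measurable
  ultimately show ?thesis
    using Sigma_cls_insert_antimono[OF I0] that by blast
qed

inductive_set monotone_closure :: "'a set set \<Rightarrow> 'a set set" for R where
  Basic: "a \<in> R \<Longrightarrow> a \<in> monotone_closure R"
| Inc: "(\<And>i::nat. A i \<in> monotone_closure R) \<Longrightarrow> incseq A \<Longrightarrow> (\<Union>i. A i) \<in> monotone_closure R"
| Dec: "(\<And>i::nat. A i \<in> monotone_closure R) \<Longrightarrow> decseq A \<Longrightarrow> (\<Inter>i. A i) \<in> monotone_closure R"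

lemma monotone_closure_subset:
  assumes "R \<subseteq> C"
    and "\<And>A. range A \<subseteq> C \<Longrightarrow> incseq A \<Longrightarrow> (\<Union>i. A i) \<in> C"
    and "\<And>A. range A \<subseteq> C \<Longrightarrow> decseq A \<Longrightarrow> (\<Inter>i. A i) \<in> C"
  shows "monotone_closure R \<subseteq> C"
proof
  fix a assume "a \<in> monotone_closure R"
  then show "a \<in> C"
  proof induction
    case (Basic a)
    then show ?case using assms(1) by blast
  next
    case (Inc A)
    then show ?case by (intro assms(2)) auto
  next
    case (Dec A)
    then show ?case by (intro assms(3)) auto
  qed
qed

lemma monotone_closure_Int_closed:
  assumes "\<And>a. a \<in> R \<Longrightarrow> a \<inter> b \<in> monotone_closure R" and "a \<in> monotone_closure R"
  shows "a \<inter> b \<in> monotone_closure R"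
  using assms(2)
proof induction
  case (Basic a)
  then show ?case by (rule assms(1))
next
  case (Inc A)
  have "incseq (\<lambda>i. A i \<inter> b)"
    using Inc.hyps(2) unfolding incseq_def by auto
  then have "(\<Union>i. A i \<inter> b) \<in> monotone_closure R"
    by (rule monotone_closure.Inc[OF Inc.IH])
  moreover have "(\<Union>i. A i) \<inter> b = (\<Union>i. A i \<inter> b)"
    by blast
  ultimately show ?case
    by (simp only:)
next
  case (Dec A)
  have "decseq (\<lambda>i. A i \<inter> b)"
    using Dec.hyps(2) unfolding decseq_def by auto
  then have "(\<Inter>i. A i \<inter> b) \<in> monotone_closure R"
    by (rule monotone_closure.Dec[OF Dec.IH])
  moreover have "(\<Inter>i. A i) \<inter> b = (\<Inter>i. A i \<inter> b)"
    by blast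
  ultimately show ?case
    by (simp only:)
qed

context algebra
begin

lemma monotone_closure_into_space: "a \<in> monotone_closure M \<Longrightarrow> a \<subseteq> \<Omega>"
proof (induction rule: monotone_closure.induct)
  case (Dec A)
  then show ?case by blast
qed (use space_closed in auto)

lemma monotone_closure_compl: "a \<in> monotone_closure M \<Longrightarrow> \<Omega> - a \<in> monotone_closure M"
proof (induction rule: monotone_closure.induct)
  case (Basic a)
  then show ?case by (intro monotone_closure.Basic compl_sets)
next
  case (Inc A)
  have "decseq (\<lambda>i. \<Omega> - A i)"
    using Inc.hyps(2) unfolding incseq_def decseq_def by auto
  then have "(\<Inter>i. \<Omega> - A i) \<in> monotone_closure M"
    by (rule monotone_closure.Dec[OF Inc.IH])
  moreover have "\<Omega> - (\<Union>i. A i) = (\<Inter>i. \<Omega> - A i)"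
    by blast
  ultimately show ?case
    by (simp only:)
next
  case (Dec A)
  have "incseq (\<lambda>i. \<Omega> - A i)"
    using Dec.hyps(2) unfolding incseq_def decseq_def by auto
  then have "(\<Union>i. \<Omega> - A i) \<in> monotone_closure M"
    by (rule monotone_closure.Inc[OF Dec.IH])
  moreover have "\<Omega> - (\<Inter>i. A i) = (\<Union>i. \<Omega> - A i)"
    by blast
  ultimately show ?case
    by (simp only:)
qed

lemma monotone_closure_Int:
  assumes "a \<in> monotone_closure M" "b \<in> monotone_closure M"
  shows "a \<inter> b \<in> monotone_closure M"
proof -
  have with_set: "a \<inter> b \<in> monotone_closure M" if "a \<in> monotone_closure M" "b \<in> M" for a b
    by (rule monotone_closure_Int_closed[OF _ that(1)]) (auto intro: monotone_closure.Basic Int that(2))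
  show ?thesis
  proof (rule monotone_closure_Int_closed[OF _ assms(1)])
    fix a' assume "a' \<in> M"
    with assms(2) have "b \<inter> a' \<in> monotone_closure M"
      by (rule with_set)
    then show "a' \<inter> b \<in> monotone_closure M"
      by (simp add: Int_commute)
  qed
qed

lemma sigma_algebra_monotone_closure: "sigma_algebra \<Omega> (monotone_closure M)"
  unfolding sigma_algebra_iff2
proof (intro conjI ballI allI impI)
  show "monotone_closure M \<subseteq> Pow \<Omega>"
    using monotone_closure_into_space by blast
  show "{} \<in> monotone_closure M"
    by (intro monotone_closure.Basic empty_sets)
  show "\<Omega> - a \<in> monotone_closure M" if "a \<in> monotone_closure M" for a
    using that by (rule monotone_closure_compl)
next
  fix A :: "nat \<Rightarrow> 'a set"
  assume A: "range A \<subseteq> monotone_closure M"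
  have Un: "a \<union> b \<in> monotone_closure M" if "a \<in> monotone_closure M" "b \<in> monotone_closure M" for a b
  proof -
    have "a \<union> b = \<Omega> - ((\<Omega> - a) \<inter> (\<Omega> - b))"
      using monotone_closure_into_space[OF that(1)] monotone_closure_into_space[OF that(2)] by blast
    moreover have "\<Omega> - ((\<Omega> - a) \<inter> (\<Omega> - b)) \<in> monotone_closure M"
      by (intro monotone_closure_compl monotone_closure_Int that)
    ultimately show ?thesis
      by (simp only:)
  qed
  have partial: "(\<Union>i<n. A i) \<in> monotone_closure M" for n
  proof (induction n)
    case 0
    then show ?case by (simp add: empty_sets monotone_closure.Basic)
  next
    case (Suc n)
    have "A n \<in> monotone_closure M"
      using A by blast
    then show ?case
      unfolding lessThan_Suc UN_insert using Suc.IH by (rule Un)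
  qed
  have "incseq (\<lambda>n. \<Union>i<n. A i)"
    by (intro monoI UN_mono) auto
  then have "(\<Union>n. \<Union>i<n. A i) \<in> monotone_closure M"
    by (rule monotone_closure.Inc[OF partial])
  then show "(\<Union>i. A i) \<in> monotone_closure M"
    using UN_UN_finite_eq[of A] by (simp add: atLeast0LessThan)
qed

lemma sigma_sets_subset_monotone_class:
  assumes "M \<subseteq> C"
    and "\<And>A. range A \<subseteq> C \<Longrightarrow> incseq A \<Longrightarrow> (\<Union>i. A i) \<in> C"
    and "\<And>A. range A \<subseteq> C \<Longrightarrow> decseq A \<Longrightarrow> (\<Inter>i. A i) \<in> C"
  shows "sigma_sets \<Omega> M \<subseteq> C"
proof -
  have "sigma_sets \<Omega> M \<subseteq> monotone_closure M"
    using sigma_algebra_monotone_closure by (rule sigma_algebra.sigma_sets_subset) (auto intro: monotone_closure.Basic)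
  also have "\<dots> \<subseteq> C"
    using assms by (rule monotone_closure_subset)
  finally show ?thesis .
qed

end

locale capacity =
  fixes M :: "'a measure" and v :: "'a set \<Rightarrow> real"
  assumes mono: "\<And>A B. A \<in> sets M \<Longrightarrow> B \<in> sets M \<Longrightarrow> A \<subseteq> B \<Longrightarrow> v A \<le> v B"
    and empty: "v {} = 0"
begin

lemma nonneg: "A \<in> sets M \<Longrightarrow> 0 \<le> v A"
  using mono[of "{}" A] empty by simp

lemma mu_pre_Diff_nonneg:
  assumes I: "I \<in> Sigma_cls M" and "X \<in> I" "Y \<in> I"
  shows "0 \<le> mu_pre v I (X - Y)"
proof -
  have "X \<in> sets M" "X \<inter> Y \<in> sets M"
    using assms Sigma_clsD(1)[OF I] by auto
  then show ?thesis
    using mu_pre_Diff[where v=v, OF Sigma_clsD(2)[OF I] empty assms(2,3)] mono[of "X \<inter> Y" X] by simp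
qed

lemma mu_pre_chain_diffs_nonneg:
  assumes "I \<in> Sigma_cls M" "s \<in> chain_diffs I"
  shows "0 \<le> mu_pre v I s"
  using assms mu_pre_Diff_nonneg unfolding chain_diffs_def by blast

end

locale continuous_capacity = capacity +
  assumes continuous: "continuous_sf M v"
begin

lemma countably_additive_mu_pre:
  assumes I: "I \<in> Sigma_cls M"
  shows "countably_additive (chain_diffs I) (\<lambda>s. ennreal (mu_pre v I s))"
  unfolding countably_additive_def
proof (intro allI impI)
  fix A :: "nat \<Rightarrow> 'a set"
  assume A: "range A \<subseteq> chain_diffs I" "disjoint_family A" "(\<Union>i. A i) \<in> chain_diffs I"
  have "chain_diffs I \<subseteq> J_alg I"
    using chain_diffs_subset_J_alg[OF Sigma_clsD(2)[OF I]] .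
  then have sums: "(\<lambda>i. mu_pre v I (A i)) sums mu_pre v I (\<Union>i. A i)"
    using continuous I A unfolding continuous_sf_def by (meson order_trans subsetD)
  have "0 \<le> mu_pre v I (A i)" for i
    using mu_pre_chain_diffs_nonneg[OF I] A(1) by blast
  then have "(\<Sum>i. ennreal (mu_pre v I (A i))) = ennreal (\<Sum>i. mu_pre v I (A i))"
    using sums_summable[OF sums] by (rule suminf_ennreal2)
  then show "(\<Sum>i. ennreal (mu_pre v I (A i))) = ennreal (mu_pre v I (\<Union>i. A i))"
    using sums_unique[OF sums] by simp
qed

lemma ex_measure_extending_mu_pre:
  assumes I: "I \<in> Sigma_cls M"
  obtains m where "sets m = sets M"
    and "\<And>s. s \<in> chain_diffs I \<Longrightarrow> emeasure m s = ennreal (mu_pre v I s)"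
proof -
  note chain = Sigma_clsD(2)[OF I] and IM = Sigma_clsD(1)[OF I]
  interpret semiring_of_sets "space M" "chain_diffs I"
    by (rule semiring_of_sets_chain_diffs_Sigma_cls[OF I])
  have "mu_pre v I {} = 0"
    using mu_pre_Diff[where v=v, OF chain empty Sigma_clsD(3)[OF I] Sigma_clsD(3)[OF I]] empty by simp
  then have "positive (chain_diffs I) (\<lambda>s. ennreal (mu_pre v I s))"
    unfolding positive_def by simp
  then obtain \<mu> where agree: "\<And>s. s \<in> chain_diffs I \<Longrightarrow> \<mu> s = ennreal (mu_pre v I s)"
    and ms: "measure_space (space M) (sigma_sets (space M) (chain_diffs I)) \<mu>"
    using caratheodory countably_additive_mu_pre[OF I] by blast
  have generated: "sigma_sets (space M) (chain_diffs I) = sets M"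
  proof
    show "sigma_sets (space M) (chain_diffs I) \<subseteq> sets M"
      using chain_diffs_subset_sets[OF IM] by (rule sets.sigma_sets_subset)
    show "sets M \<subseteq> sigma_sets (space M) (chain_diffs I)"
      using sigma_sets_mono'[OF subset_chain_diffs[OF Sigma_clsD(3)[OF I]], of "space M"] Sigma_clsD(5)[OF I]
      by simp
  qed
  define m where "m = measure_of (space M) (sets M) \<mu>"
  have "sets m = sets M"
    unfolding m_def by (simp add: sets.sigma_sets_eq sets.space_closed)
  moreover have "emeasure m s = ennreal (mu_pre v I s)" if "s \<in> chain_diffs I" for s
  proof -
    have "emeasure m s = \<mu> s"
      unfolding m_def using ms that chain_diffs_subset_sets[OF IM]
      by (intro emeasure_measure_of_sigma) (auto simp: measure_space_def generated)
    then show ?thesis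
      using agree[OF that] by simp
  qed
  ultimately show ?thesis
    by (rule that)
qed

lemma emeasure_J_alg:
  assumes I: "I \<in> Sigma_cls M" and sets: "sets m = sets M"
    and agree: "\<And>s. s \<in> chain_diffs I \<Longrightarrow> emeasure m s = ennreal (mu_pre v I s)"
    and A: "A \<in> J_alg I"
  shows "emeasure m A = ennreal (mu_pre v I A)"
proof -
  note chain = Sigma_clsD(2)[OF I]
  obtain n C D where rep: "chain_rep I n C D" and A_eq: "A = (\<Union>i<n. C i - D i)"
    using A unfolding J_alg_def by blast
  have CD: "C i \<in> I" "D i \<in> I" "D i \<subseteq> C i" if "i < n" for i
    using rep that unfolding chain_rep_def by auto
  have diffs: "C i - D i \<in> chain_diffs I" if "i < n" for i
    using CD[OF that] unfolding chain_diffs_def by blast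
  have "emeasure m A = (\<Sum>i<n. emeasure m (C i - D i))"
    unfolding A_eq using diffs chain_diffs_subset_sets[OF Sigma_clsD(1)[OF I]] sets chain_rep_disjoint[OF rep]
    by (intro sum_emeasure[symmetric]) auto
  also have "\<dots> = (\<Sum>i<n. ennreal (mu_pre v I (C i - D i)))"
    using agree diffs by simp
  also have "\<dots> = ennreal (\<Sum>i<n. mu_pre v I (C i - D i))"
    using mu_pre_Diff_nonneg[OF I] CD by (intro sum_ennreal) auto
  also have "(\<Sum>i<n. mu_pre v I (C i - D i)) = (\<Sum>i<n. v (C i) - v (D i))"
    using mu_pre_Diff[where v=v, OF chain empty] CD by (intro sum.cong) (auto simp: Int_absorb1)
  also have "\<dots> = mu_pre v I A"
    unfolding A_eq using mu_pre_chain_rep[where v=v, OF chain empty rep] by simp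
  finally show ?thesis .
qed

lemma mu_ext:
  assumes I: "I \<in> Sigma_cls M"
  shows "sets (mu_ext M v I) = sets M"
    and "\<And>A. A \<in> J_alg I \<Longrightarrow> emeasure (mu_ext M v I) A = ennreal (mu_pre v I A)"
proof -
  let ?P = "\<lambda>m. sets m = sets M \<and> (\<forall>A\<in>J_alg I. emeasure m A = ennreal (mu_pre v I A))"
  obtain m where "sets m = sets M" "\<And>s. s \<in> chain_diffs I \<Longrightarrow> emeasure m s = ennreal (mu_pre v I s)"
    using ex_measure_extending_mu_pre[OF I] by blast
  then have m: "?P m"
    using emeasure_J_alg[OF I] by blast
  have I_J: "X \<in> J_alg I" if "X \<in> I" for X
    using Diff_in_J_alg[OF Sigma_clsD(2)[OF I] that Sigma_clsD(3)[OF I]] by simp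
  have "m' = m" if "?P m'" for m'
    using that m I_J Sigma_clsD(4)[OF I] by (intro measure_eqI_Sigma_cls[OF I]) auto
  then have "mu_ext M v I = m"
    unfolding mu_ext_def using m by (rule the_equality[rotated])
  then show "sets (mu_ext M v I) = sets M"
    and "\<And>A. A \<in> J_alg I \<Longrightarrow> emeasure (mu_ext M v I) A = ennreal (mu_pre v I A)"
    using m by auto
qed

lemma space_mu_ext: "I \<in> Sigma_cls M \<Longrightarrow> space (mu_ext M v I) = space M"
  using mu_ext(1) by (rule sets_eq_imp_space_eq)

lemma measure_mu_ext_Diff:
  assumes I: "I \<in> Sigma_cls M" and "X \<in> I" "Y \<in> I"
  shows "measure (mu_ext M v I) (X - Y) = v X - v (X \<inter> Y)"
  using mu_ext(2)[OF I Diff_in_J_alg[OF Sigma_clsD(2)[OF I] assms(2,3)]]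
    mu_pre_Diff[where v=v, OF Sigma_clsD(2)[OF I] empty assms(2,3)] mu_pre_Diff_nonneg[OF assms]
  by (simp add: measure_def)

lemma measure_mu_ext:
  assumes "I \<in> Sigma_cls M" "X \<in> I"
  shows "measure (mu_ext M v I) X = v X"
  using measure_mu_ext_Diff[OF assms Sigma_clsD(3)[OF assms(1)]] empty by simp

lemma finite_measure_mu_ext:
  assumes I: "I \<in> Sigma_cls M"
  shows "finite_measure (mu_ext M v I)"
proof
  have "space M \<in> J_alg I"
    using Diff_in_J_alg[OF Sigma_clsD(2,4,3)[OF I]] by simp
  then show "emeasure (mu_ext M v I) (space (mu_ext M v I)) \<noteq> \<infinity>"
    using mu_ext(2)[OF I] space_mu_ext[OF I] by simp
qed

(* Along a monotone sequence, v coincides with the measure mu_{v,I'} of a chain I' through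
   the sequence, so it inherits the continuity of measures. *)
lemma tendsto_incseq:
  assumes "Sigma_cls M \<noteq> {}" "range A \<subseteq> sets M" "incseq A"
  shows "(\<lambda>n. v (A n)) \<longlonglongrightarrow> v (\<Union>n. A n)"
proof -
  obtain I where I: "I \<in> Sigma_cls M"
    using assms(1) by blast
  define T where "T k = A (nat (- k))" for k :: int
  have A_eq: "A n = T (- int n)" for n
    by (simp add: T_def)
  have "antimono T"
    unfolding antimono_def T_def by (auto intro!: incseqD[OF assms(3)])
  moreover have "T k \<in> sets M" for k
    using assms(2) by (auto simp: T_def)
  ultimately obtain I' where I': "I' \<in> Sigma_cls M" "\<And>k. T k \<in> I'" "(\<Union>k. T k) \<in> I'"
    using Sigma_cls_insert_antimono[OF I] by blast
  have "(\<Union>k. T k) = (\<Union>n. A n)"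
  proof
    show "(\<Union>k. T k) \<subseteq> (\<Union>n. A n)"
      unfolding T_def by blast
    show "(\<Union>n. A n) \<subseteq> (\<Union>k. T k)"
      unfolding A_eq by blast
  qed
  then have in_I': "A n \<in> I'" "(\<Union>n. A n) \<in> I'" for n
    using I'(2,3) A_eq by auto
  interpret finite_measure "mu_ext M v I'"
    by (rule finite_measure_mu_ext[OF I'(1)])
  have "(\<lambda>n. measure (mu_ext M v I') (A n)) \<longlonglongrightarrow> measure (mu_ext M v I') (\<Union>n. A n)"
    using assms(2,3) mu_ext(1)[OF I'(1)] by (intro finite_Lim_measure_incseq) auto
  then show ?thesis
    by (simp add: measure_mu_ext[OF I'(1)] in_I')
qed

lemma tendsto_decseq:
  assumes "Sigma_cls M \<noteq> {}" "range A \<subseteq> sets M" "decseq A"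
  shows "(\<lambda>n. v (A n)) \<longlonglongrightarrow> v (\<Inter>n. A n)"
proof -
  obtain I where I: "I \<in> Sigma_cls M"
    using assms(1) by blast
  define T where "T k = A (nat k)" for k :: int
  have A_eq: "A n = T (int n)" for n
    by (simp add: T_def)
  have "antimono T"
    unfolding antimono_def T_def by (auto intro!: decseqD[OF assms(3)])
  moreover have "T k \<in> sets M" for k
    using assms(2) by (auto simp: T_def)
  ultimately obtain I' where I': "I' \<in> Sigma_cls M" "\<And>k. T k \<in> I'" "(\<Inter>k. T k) \<in> I'"
    using Sigma_cls_insert_antimono[OF I] by blast
  have "(\<Inter>k. T k) = (\<Inter>n. A n)"
  proof
    show "(\<Inter>k. T k) \<subseteq> (\<Inter>n. A n)"
      unfolding A_eq by blast
    show "(\<Inter>n. A n) \<subseteq> (\<Inter>k. T k)"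
      unfolding T_def by blast
  qed
  then have in_I': "A n \<in> I'" "(\<Inter>n. A n) \<in> I'" for n
    using I'(2,3) A_eq by auto
  interpret finite_measure "mu_ext M v I'"
    by (rule finite_measure_mu_ext[OF I'(1)])
  have "(\<lambda>n. measure (mu_ext M v I') (A n)) \<longlonglongrightarrow> measure (mu_ext M v I') (\<Inter>n. A n)"
    using assms(2,3) mu_ext(1)[OF I'(1)] by (intro finite_Lim_measure_decseq) auto
  then show ?thesis
    by (simp add: measure_mu_ext[OF I'(1)] in_I')
qed

end

locale continuous_submodular_capacity = continuous_capacity +
  assumes submodular: "\<And>A B. A \<in> sets M \<Longrightarrow> B \<in> sets M \<Longrightarrow> v (A \<union> B) + v (A \<inter> B) \<le> v A + v B"
begin

(* Split off the piece X - Y with the largest X: the remaining pieces lie in Y, and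
   submodularity applied to the whole union and Y closes the induction step. *)
lemma measure_mu_ext_le_disjoint_Union:
  assumes I: "I \<in> Sigma_cls M"
  shows "finite C \<Longrightarrow> C \<subseteq> chain_diffs I \<Longrightarrow> disjoint C \<Longrightarrow> measure (mu_ext M v I) (\<Union>C) \<le> v (\<Union>C)"
proof (induction C rule: finite_psubset_induct)
  case (psubset C)
  note IM = Sigma_clsD(1)[OF I]
  interpret finite_measure "mu_ext M v I"
    by (rule finite_measure_mu_ext[OF I])
  show ?case
  proof (cases "C = {}")
    case False
    obtain s X Y where s: "s \<in> C" and XY: "X \<in> I" "Y \<in> I" "Y \<subseteq> X" "s = X - Y"
      and rest: "\<Union>(C - {s}) \<subseteq> Y"
      using chain_diffs_peel[OF Sigma_clsD(2)[OF I] psubset.hyps False psubset.prems] .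
    have C_sets: "C \<subseteq> sets M"
      using psubset.prems(1) chain_diffs_subset_sets[OF IM] by blast
    then have sets: "\<Union>C \<in> sets M" "\<Union>(C - {s}) \<in> sets M" "s \<in> sets M" "Y \<in> sets M"
      using psubset.hyps s XY(2) IM by (auto intro: sets.finite_Union)
    have "\<Union>C = s \<union> \<Union>(C - {s})" "s \<inter> \<Union>(C - {s}) = {}"
      using s rest XY(4) by blast+
    then have "measure (mu_ext M v I) (\<Union>C) = measure (mu_ext M v I) s + measure (mu_ext M v I) (\<Union>(C - {s}))"
      using sets mu_ext(1)[OF I] finite_measure_Union by metis
    also have "measure (mu_ext M v I) s = v X - v Y"
      using measure_mu_ext_Diff[OF I XY(1,2)] XY(3,4) by (simp add: Int_absorb1)
    also have "measure (mu_ext M v I) (\<Union>(C - {s})) \<le> v (\<Union>(C - {s}))"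
      using s psubset.prems by (intro psubset.IH) (auto intro: pairwise_subset)
    finally have "measure (mu_ext M v I) (\<Union>C) \<le> v X - v Y + v (\<Union>(C - {s}))"
      by simp
    moreover have "v X + v (\<Union>(C - {s})) \<le> v (\<Union>C) + v Y"
    proof -
      have "\<Union>C \<union> Y = X" "\<Union>C \<inter> Y = \<Union>(C - {s})"
        using \<open>\<Union>C = s \<union> \<Union>(C - {s})\<close> rest XY(3,4) by blast+
      then show ?thesis
        using submodular[OF sets(1,4)] by simp
    qed
    ultimately show ?thesis
      by simp
  qed (simp add: empty)
qed

lemma monotone_class_mu_ext_le:
  assumes I: "I \<in> Sigma_cls M"
  defines "C \<equiv> {A \<in> sets M. measure (mu_ext M v I) A \<le> v A}"
  shows "\<And>A. range A \<subseteq> C \<Longrightarrow> incseq A \<Longrightarrow> (\<Union>i. A i) \<in> C"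
    and "\<And>A. range A \<subseteq> C \<Longrightarrow> decseq A \<Longrightarrow> (\<Inter>i. A i) \<in> C"
proof -
  interpret m: finite_measure "mu_ext M v I"
    by (rule finite_measure_mu_ext[OF I])
  have limit: "L \<in> C" if "range A \<subseteq> C" "L \<in> sets M"
    "(\<lambda>i. measure (mu_ext M v I) (A i)) \<longlonglongrightarrow> measure (mu_ext M v I) L" "(\<lambda>i. v (A i)) \<longlonglongrightarrow> v L"
    for A L
    using that LIMSEQ_le[OF that(3,4)] unfolding C_def by blast
  fix A :: "nat \<Rightarrow> 'a set"
  assume A: "range A \<subseteq> C"
  then have A_sets: "range A \<subseteq> sets M"
    unfolding C_def by blast
  show "(\<Union>i. A i) \<in> C" if "incseq A"
  proof (rule limit[OF A])
    show "(\<Union>i. A i) \<in> sets M"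
      using A_sets by blast
    show "(\<lambda>i. measure (mu_ext M v I) (A i)) \<longlonglongrightarrow> measure (mu_ext M v I) (\<Union>i. A i)"
      using A_sets that mu_ext(1)[OF I] by (intro m.finite_Lim_measure_incseq) auto
    show "(\<lambda>i. v (A i)) \<longlonglongrightarrow> v (\<Union>i. A i)"
      using I A_sets that by (intro tendsto_incseq) auto
  qed
  show "(\<Inter>i. A i) \<in> C" if "decseq A"
  proof (rule limit[OF A])
    show "(\<Inter>i. A i) \<in> sets M"
      using A_sets by blast
    show "(\<lambda>i. measure (mu_ext M v I) (A i)) \<longlonglongrightarrow> measure (mu_ext M v I) (\<Inter>i. A i)"
      using A_sets that mu_ext(1)[OF I] by (intro m.finite_Lim_measure_decseq) auto
    show "(\<lambda>i. v (A i)) \<longlonglongrightarrow> v (\<Inter>i. A i)"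
      using I A_sets that by (intro tendsto_decseq) auto
  qed
qed

lemma measure_mu_ext_le:
  assumes I: "I \<in> Sigma_cls M" and A: "A \<in> sets M"
  shows "measure (mu_ext M v I) A \<le> v A"
proof -
  interpret semiring_of_sets "space M" "chain_diffs I"
    by (rule semiring_of_sets_chain_diffs_Sigma_cls[OF I])
  interpret R: algebra "space M" generated_ring
  proof (intro algebra.intro generating_ring algebra_axioms.intro generated_ringI_Basic)
    show "space M \<in> chain_diffs I"
      using Sigma_clsD(3,4)[OF I] unfolding chain_diffs_def by blast
  qed
  let ?C = "{A \<in> sets M. measure (mu_ext M v I) A \<le> v A}"
  have "generated_ring \<subseteq> ?C"
  proof
    fix a assume "a \<in> generated_ring"
    then obtain C where "finite C" "disjoint C" "C \<subseteq> chain_diffs I" "a = \<Union>C"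
      by (rule generated_ringE)
    moreover have "a \<in> sets M"
      using calculation chain_diffs_subset_sets[OF Sigma_clsD(1)[OF I]] by (auto intro: sets.finite_Union)
    ultimately show "a \<in> ?C"
      using measure_mu_ext_le_disjoint_Union[OF I] by blast
  qed
  then have "sigma_sets (space M) generated_ring \<subseteq> ?C"
    using monotone_class_mu_ext_le[OF I] by (rule R.sigma_sets_subset_monotone_class)
  moreover have "sets M \<subseteq> sigma_sets (space M) generated_ring"
    unfolding sigma_sets_generated_ring_eq Sigma_clsD(5)[OF I, symmetric]
    by (rule sigma_sets_mono') (rule subset_chain_diffs[OF Sigma_clsD(3)[OF I]])
  ultimately show ?thesis
    using A by blast
qed

end

lemma borel_measurable_antimono:
  fixes g :: "real \<Rightarrow> real"
  assumes "antimono g"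
  shows "g \<in> borel_measurable borel"
proof -
  have "mono (\<lambda>z. - g z)"
    using assms unfolding antimono_def mono_def by auto
  then have "(\<lambda>z. - (- g z)) \<in> borel_measurable borel"
    by (intro borel_measurable_uminus borel_measurable_mono)
  then show ?thesis
    by simp
qed

lemma antimono_set_integrable:
  fixes g :: "real \<Rightarrow> real"
  assumes anti: "antimono g" and nonneg: "\<And>z. 0 \<le> g z" and vanish: "\<And>z. b \<le> z \<Longrightarrow> g z = 0"
  shows "set_integrable lborel {y..} g"
  unfolding set_integrable_def
proof (rule Bochner_Integration.integrable_bound)
  show "integrable lborel (\<lambda>z. g y * indicator {y..b} z :: real)"
    by (intro integrable_mult_right integrable_real_indicator) (simp_all add: emeasure_lborel_Icc_eq)
  show "(\<lambda>z. indicator {y..} z *\<^sub>R g z) \<in> borel_measurable lborel"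
    using borel_measurable_antimono[OF anti] by measurable
  have "g z \<le> g y" if "y \<le> z" for z
    using anti that by (simp add: antimono_def)
  then show "AE z in lborel. norm (indicator {y..} z *\<^sub>R g z) \<le> norm (g y * indicator {y..b} z)"
    using nonneg vanish by (intro AE_I2) (auto simp: indicator_def not_le)
qed

lemma set_integral_atLeast_shift:
  fixes g :: "real \<Rightarrow> real"
  shows "(LBINT z:{y..}. g (z + d)) = (LBINT z:{y + d..}. g z)"
proof -
  have "(LBINT z:{y + d..}. g z) = integral\<^sup>L lborel (\<lambda>z. indicator {y + d..} z * g z)"
    by (simp add: set_lebesgue_integral_def)
  also have "\<dots> = \<bar>1\<bar> *\<^sub>R integral\<^sup>L lborel (\<lambda>z. indicator {y + d..} (d + 1 * z) * g (d + 1 * z))"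
    by (rule lborel_integral_real_affine) simp
  also have "\<dots> = (LBINT z:{y..}. g (z + d))"
    by (simp add: set_lebesgue_integral_def indicator_def add.commute)
  finally show ?thesis ..
qed

lemma Lim_at_bot_layer_integral:
  fixes g :: "real \<Rightarrow> real"
  assumes int: "\<And>y. set_integrable lborel {y..} g" and top: "\<And>z. z < a \<Longrightarrow> g z = K" and "y \<le> a"
  shows "Lim at_bot (\<lambda>y. y * K + (LBINT z:{y..}. g z)) = y * K + (LBINT z:{y..}. g z)"
proof -
  have const: "y * K + (LBINT z:{y..}. g z) = a * K + (LBINT z:{a..}. g z)" if "y \<le> a" for y
  proof -
    have "{y..} = {y..<a} \<union> {a..}" "{y..<a} \<inter> {a..} = {}"
      using that by auto
    moreover have "set_integrable lborel {y..<a} g" "set_integrable lborel {a..} g"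
      using int[of y] that by (auto intro: set_integrable_subset)
    ultimately have "(LBINT z:{y..}. g z) = (LBINT z:{y..<a}. g z) + (LBINT z:{a..}. g z)"
      by (simp add: set_integral_Un)
    also have "(LBINT z:{y..<a}. g z) = (LBINT z:{y..<a}. K)"
      using top by (intro set_lebesgue_integral_cong) auto
    also have "\<dots> = (a - y) * K"
      using that by (simp add: set_integral_const measure_lborel_Ico)
    finally have "(LBINT z:{y..}. g z) = (a - y) * K + (LBINT z:{a..}. g z)" .
    moreover have "(a - y) * K = a * K - y * K"
      by (rule left_diff_distrib)
    ultimately show ?thesis
      by linarith
  qed
  have "\<forall>\<^sub>F y in at_bot. y * K + (LBINT z:{y..}. g z) = a * K + (LBINT z:{a..}. g z)"
    unfolding eventually_at_bot_linorder using const by blast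
  then have "((\<lambda>y. y * K + (LBINT z:{y..}. g z)) \<longlongrightarrow> a * K + (LBINT z:{a..}. g z)) at_bot"
    by (rule tendsto_eventually)
  then show ?thesis
    using const[OF \<open>y \<le> a\<close>] by (simp add: tendsto_Lim)
qed

lemma (in finite_measure) integral_eq_layer_cake:
  fixes f :: "'a \<Rightarrow> real"
  assumes f: "integrable M f" and y: "\<And>\<omega>. \<omega> \<in> space M \<Longrightarrow> y \<le> f \<omega>"
  shows "integral\<^sup>L M f = y * measure M (space M) + (LBINT z:{y..}. measure M {\<omega>\<in>space M. z < f \<omega>})"
proof -
  interpret P: pair_sigma_finite M lborel
    by (intro pair_sigma_finite.intro sigma_finite_measure_axioms lborel.sigma_finite_measure_axioms)
  have [measurable]: "f \<in> borel_measurable M"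
    using f by (rule borel_measurable_integrable)
  define g where "g z = indicator {y..} z * measure M {\<omega>\<in>space M. z < f \<omega>}" for z
  have "antimono (\<lambda>z. measure M {\<omega>\<in>space M. z < f \<omega>})"
    unfolding antimono_def by (auto intro!: finite_measure_mono)
  then have "g \<in> borel_measurable borel"
    unfolding g_def using borel_measurable_antimono by measurable
  have "(\<lambda>p. indicator {y..<f (fst p)} (snd p) :: ennreal)
      = (\<lambda>p. if y \<le> snd p \<and> snd p < f (fst p) then 1 else 0)"
    by (auto simp: indicator_def fun_eq_iff)
  then have band: "case_prod (\<lambda>\<omega> z. indicator {y..<f \<omega>} z :: ennreal) \<in> borel_measurable (M \<Otimes>\<^sub>M lborel)"
    by (simp add: case_prod_beta')
  have "(\<integral>\<^sup>+\<omega>. ennreal (f \<omega> - y) \<partial>M) = (\<integral>\<^sup>+\<omega>. (\<integral>\<^sup>+z. indicator {y..<f \<omega>} z \<partial>lborel) \<partial>M)"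
    using y by (intro nn_integral_cong) simp
  also have "\<dots> = (\<integral>\<^sup>+z. (\<integral>\<^sup>+\<omega>. indicator {y..<f \<omega>} z \<partial>M) \<partial>lborel)"
    by (rule P.Fubini'[OF band, symmetric])
  also have "\<dots> = (\<integral>\<^sup>+z. ennreal (g z) \<partial>lborel)"
  proof (rule nn_integral_cong)
    fix z :: real
    have "(\<integral>\<^sup>+\<omega>. indicator {y..<f \<omega>} z \<partial>M)
        = (\<integral>\<^sup>+\<omega>. indicator {\<omega>\<in>space M. y \<le> z \<and> z < f \<omega>} \<omega> \<partial>M)"
      by (rule nn_integral_cong) (auto simp: indicator_def)
    also have "\<dots> = emeasure M {\<omega>\<in>space M. y \<le> z \<and> z < f \<omega>}"
      by (rule nn_integral_indicator) measurable
    finally show "(\<integral>\<^sup>+\<omega>. indicator {y..<f \<omega>} z \<partial>M) = ennreal (g z)"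
      by (cases "y \<le> z") (simp_all add: g_def emeasure_eq_measure)
  qed
  finally have "integral\<^sup>L M (\<lambda>\<omega>. f \<omega> - y) = integral\<^sup>L lborel g"
    using y \<open>g \<in> borel_measurable borel\<close>
    by (subst (1 2) enn2real_nn_integral_eq_integral[symmetric]) (auto simp: g_def)
  moreover have "integral\<^sup>L M (\<lambda>\<omega>. f \<omega> - y) = integral\<^sup>L M f - y * measure M (space M)"
    using f by (simp add: Bochner_Integration.integral_diff)
  ultimately show ?thesis
    by (simp add: g_def[abs_def] set_lebesgue_integral_def)
qed

context capacity
begin

lemma level_set_integrable:
  fixes f :: "'a \<Rightarrow> real"
  assumes f[measurable]: "f \<in> borel_measurable M" and B: "\<And>\<omega>. \<omega> \<in> space M \<Longrightarrow> f \<omega> \<le> B"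
  shows "set_integrable lborel {y..} (\<lambda>z. v {\<omega>\<in>space M. z < f \<omega>})"
proof (rule antimono_set_integrable)
  show "antimono (\<lambda>z. v {\<omega>\<in>space M. z < f \<omega>})"
    unfolding antimono_def by (auto intro!: mono)
  show "0 \<le> v {\<omega>\<in>space M. z < f \<omega>}" for z
    by (rule nonneg) measurable
  show "v {\<omega>\<in>space M. z < f \<omega>} = 0" if "B \<le> z" for z
  proof -
    have "{\<omega>\<in>space M. z < f \<omega>} = {}"
      using B that by force
    then show ?thesis
      using empty by (simp only:)
  qed
qed

lemma choquet_eq:
  fixes f :: "'a \<Rightarrow> real"
  assumes f[measurable]: "f \<in> borel_measurable M"
    and B: "\<And>\<omega>. \<omega> \<in> space M \<Longrightarrow> \<bar>f \<omega>\<bar> \<le> B" and "y \<le> - B"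
  shows "choquet M v f = y * v (space M) + (LBINT z:{y..}. v {\<omega>\<in>space M. z < f \<omega>})"
  unfolding choquet_def
proof (rule Lim_at_bot_layer_integral[OF _ _ \<open>y \<le> - B\<close>])
  show "set_integrable lborel {y..} (\<lambda>z. v {\<omega>\<in>space M. z < f \<omega>})" for y
    using B by (intro level_set_integrable f) (auto simp: abs_le_iff)
  show "v {\<omega>\<in>space M. z < f \<omega>} = v (space M)" if "z < - B" for z
  proof -
    have "{\<omega>\<in>space M. z < f \<omega>} = space M"
      using B that by (force simp: abs_le_iff)
    then show ?thesis
      by (simp only:)
  qed
qed

lemma choquet_add_const:
  fixes f :: "'a \<Rightarrow> real"
  assumes f[measurable]: "f \<in> borel_measurable M" and bounded: "bounded (f ` space M)"
  shows "choquet M v (\<lambda>\<omega>. f \<omega> + c) = choquet M v f + c * v (space M)"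
proof -
  obtain B where B: "\<And>\<omega>. \<omega> \<in> space M \<Longrightarrow> \<bar>f \<omega>\<bar> \<le> B"
    using bounded unfolding bounded_real by blast
  define y where "y = - B - \<bar>c\<bar>"
  let ?g = "\<lambda>z. v {\<omega>\<in>space M. z < f \<omega>}"
  have "\<bar>f \<omega> + c\<bar> \<le> B + \<bar>c\<bar>" if "\<omega> \<in> space M" for \<omega>
    using B[OF that] abs_triangle_ineq[of "f \<omega>" c] by linarith
  then have "choquet M v (\<lambda>\<omega>. f \<omega> + c) = y * v (space M) + (LBINT z:{y..}. v {\<omega>\<in>space M. z < f \<omega> + c})"
    by (intro choquet_eq[where B="B + \<bar>c\<bar>"]) (auto simp: y_def)
  also have "(\<lambda>z. v {\<omega>\<in>space M. z < f \<omega> + c}) = (\<lambda>z. ?g (z + - c))"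
    by (simp add: algebra_simps)
  also have "(LBINT z:{y..}. ?g (z + - c)) = (LBINT z:{y + - c..}. ?g z)"
    by (rule set_integral_atLeast_shift)
  also have "(LBINT z:{y + - c..}. ?g z) = choquet M v f - (y + - c) * v (space M)"
    using B by (subst choquet_eq[where B=B and y="y + - c"]) (auto simp: y_def)
  finally show ?thesis
    by (simp add: algebra_simps)
qed

end

lemma capacity_measure:
  assumes "finite_measure m" "sets m = sets M"
  shows "capacity M (measure m)"
proof
  interpret finite_measure m by fact
  show "measure m A \<le> measure m B" if "A \<in> sets M" "B \<in> sets M" "A \<subseteq> B" for A B
    using that assms(2) by (intro finite_measure_mono) auto
qed simp

lemma choquet_measure:
  fixes f :: "'a \<Rightarrow> real"
  assumes m: "finite_measure m" "sets m = sets M"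
    and f[measurable]: "f \<in> borel_measurable M" and bounded: "bounded (f ` space M)"
  shows "choquet M (measure m) f = integral\<^sup>L m f"
proof -
  interpret finite_measure m by (rule m(1))
  interpret capacity M "measure m" by (rule capacity_measure[OF m])
  have space: "space m = space M"
    using m(2) by (rule sets_eq_imp_space_eq)
  obtain B where B: "\<And>\<omega>. \<omega> \<in> space M \<Longrightarrow> \<bar>f \<omega>\<bar> \<le> B"
    using bounded unfolding bounded_real by blast
  have "f \<in> borel_measurable m"
    using f by (simp add: measurable_cong_sets[OF m(2) refl])
  then have "integrable m f"
    using B space by (intro integrable_const_bound[where B=B]) auto
  moreover have "- B \<le> f \<omega>" if "\<omega> \<in> space m" for \<omega>
    using B[of \<omega>] that space by (simp add: abs_le_iff)
  ultimately have "integral\<^sup>L m f = - B * measure m (space m) + (LBINT z:{- B..}. measure m {\<omega>\<in>space m. z < f \<omega>})"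
    by (rule integral_eq_layer_cake)
  also have "\<dots> = choquet M (measure m) f"
    unfolding space using B by (intro choquet_eq[symmetric]) auto
  finally show ?thesis ..
qed

lemma choquet_mono:
  fixes f g :: "'a \<Rightarrow> real"
  assumes u: "capacity M u" and w: "capacity M w" and total: "u (space M) = w (space M)"
    and f[measurable]: "f \<in> borel_measurable M" "bounded (f ` space M)"
    and g[measurable]: "g \<in> borel_measurable M" "bounded (g ` space M)"
    and le: "\<And>z. u {\<omega>\<in>space M. z < f \<omega>} \<le> w {\<omega>\<in>space M. z < g \<omega>}"
  shows "choquet M u f \<le> choquet M w g"
proof -
  obtain B\<^sub>f B\<^sub>g where "\<And>\<omega>. \<omega> \<in> space M \<Longrightarrow> \<bar>f \<omega>\<bar> \<le> B\<^sub>f" "\<And>\<omega>. \<omega> \<in> space M \<Longrightarrow> \<bar>g \<omega>\<bar> \<le> B\<^sub>g"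
    using f(2) g(2) unfolding bounded_real by blast
  then have B: "\<bar>f \<omega>\<bar> \<le> max B\<^sub>f B\<^sub>g" "\<bar>g \<omega>\<bar> \<le> max B\<^sub>f B\<^sub>g" if "\<omega> \<in> space M" for \<omega>
    using that by (auto simp: le_max_iff_disj)
  let ?y = "- max B\<^sub>f B\<^sub>g"
  have "choquet M u f = ?y * u (space M) + (LBINT z:{?y..}. u {\<omega>\<in>space M. z < f \<omega>})"
    using B by (intro capacity.choquet_eq[OF u]) auto
  also have "\<dots> \<le> ?y * w (space M) + (LBINT z:{?y..}. w {\<omega>\<in>space M. z < g \<omega>})"
    unfolding total using B le
    by (auto intro!: set_integral_mono capacity.level_set_integrable[OF u] capacity.level_set_integrable[OF w]
      simp: abs_le_iff)
  also have "\<dots> = choquet M w g"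
    using B by (intro capacity.choquet_eq[OF w, symmetric]) auto
  finally show ?thesis .
qed

lemma cSUP_eq_approx:
  fixes g :: "'i \<Rightarrow> real"
  assumes "S \<noteq> {}" "\<And>i. i \<in> S \<Longrightarrow> g i \<le> c" "\<And>e. 0 < e \<Longrightarrow> \<exists>i\<in>S. c - e \<le> g i"
  shows "(SUP i\<in>S. g i) = c"
proof (rule cSup_eq_non_empty)
  show "g ` S \<noteq> {}" "\<And>x. x \<in> g ` S \<Longrightarrow> x \<le> c"
    using assms(1,2) by auto
  show "c \<le> b" if "\<And>x. x \<in> g ` S \<Longrightarrow> x \<le> b" for b
  proof (rule field_le_epsilon)
    fix e :: real assume "0 < e"
    then obtain i where "i \<in> S" "c - e \<le> g i"
      using assms(3) by blast
    then show "c \<le> b + e"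
      using that[of "g i"] by auto
  qed
qed

context continuous_capacity
begin

lemma level_set_le_measure_mu_ext:
  fixes f :: "'a \<Rightarrow> real"
  assumes I: "I \<in> Sigma_cls M" and grid: "\<And>k::int. {\<omega>\<in>space M. of_int k * d < f \<omega>} \<in> I"
    and f[measurable]: "f \<in> borel_measurable M" and "0 < d"
  shows "v {\<omega>\<in>space M. z < f \<omega> - d} \<le> measure (mu_ext M v I) {\<omega>\<in>space M. z < f \<omega>}"
proof -
  interpret finite_measure "mu_ext M v I"
    by (rule finite_measure_mu_ext[OF I])
  define k where "k = \<lceil>z / d\<rceil>"
  have "z / d \<le> of_int k" "of_int k < z / d + 1"
    unfolding k_def using ceiling_correct[of "z / d"] by linarith+
  then have "z \<le> of_int k * d" "of_int k * d < z + d"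
    using \<open>0 < d\<close> by (simp_all add: pos_divide_le_eq pos_less_divide_eq divide_less_eq field_simps)
  have "v {\<omega>\<in>space M. z < f \<omega> - d} \<le> v {\<omega>\<in>space M. of_int k * d < f \<omega>}"
    using \<open>of_int k * d < z + d\<close> by (intro mono) auto
  also have "\<dots> = measure (mu_ext M v I) {\<omega>\<in>space M. of_int k * d < f \<omega>}"
    using measure_mu_ext[OF I grid] ..
  also have "\<dots> \<le> measure (mu_ext M v I) {\<omega>\<in>space M. z < f \<omega>}"
    using \<open>z \<le> of_int k * d\<close> mu_ext(1)[OF I] by (intro finite_measure_mono) auto
  finally show ?thesis .
qed

lemma choquet_le_integral_mu_ext:
  fixes f :: "'a \<Rightarrow> real"
  assumes "Sigma_cls M \<noteq> {}" and f[measurable]: "f \<in> borel_measurable M"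
    and bounded: "bounded (f ` space M)" and "0 < d"
  obtains I where "I \<in> Sigma_cls M" "choquet M v f - d * v (space M) \<le> integral\<^sup>L (mu_ext M v I) f"
proof -
  obtain I where I: "I \<in> Sigma_cls M" and grid: "\<And>k::int. {\<omega>\<in>space M. of_int k * d < f \<omega>} \<in> I"
    using Sigma_cls_with_level_grid[OF assms(1) f \<open>0 < d\<close>] by blast
  have m: "finite_measure (mu_ext M v I)" "sets (mu_ext M v I) = sets M"
    using finite_measure_mu_ext[OF I] mu_ext(1)[OF I] .
  have "bounded ((\<lambda>\<omega>. f \<omega> + - d) ` space M)"
    using bounded_translation[OF bounded, of "- d"] by (simp add: image_image add.commute)
  have "choquet M v f - d * v (space M) = choquet M v (\<lambda>\<omega>. f \<omega> + - d)"
    using choquet_add_const[OF f bounded, of "- d"] by simp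
  also have "\<dots> \<le> choquet M (measure (mu_ext M v I)) f"
  proof (rule choquet_mono[OF capacity_axioms capacity_measure[OF m]])
    show "v (space M) = measure (mu_ext M v I) (space M)"
      using measure_mu_ext[OF I Sigma_clsD(4)[OF I]] ..
    show "v {\<omega>\<in>space M. z < f \<omega> + - d} \<le> measure (mu_ext M v I) {\<omega>\<in>space M. z < f \<omega>}" for z
      using level_set_le_measure_mu_ext[OF I grid f \<open>0 < d\<close>] by simp
  qed (use bounded \<open>bounded ((\<lambda>\<omega>. f \<omega> + - d) ` space M)\<close> in auto)
  also have "\<dots> = integral\<^sup>L (mu_ext M v I) f"
    using m f bounded by (rule choquet_measure)
  finally show ?thesis
    using I that by blast
qed

end

context continuous_submodular_capacity
begin

lemma integral_mu_ext_le_choquet: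
  fixes f :: "'a \<Rightarrow> real"
  assumes I: "I \<in> Sigma_cls M" and f[measurable]: "f \<in> borel_measurable M"
    and bounded: "bounded (f ` space M)"
  shows "integral\<^sup>L (mu_ext M v I) f \<le> choquet M v f"
proof -
  have m: "finite_measure (mu_ext M v I)" "sets (mu_ext M v I) = sets M"
    using finite_measure_mu_ext[OF I] mu_ext(1)[OF I] .
  have "integral\<^sup>L (mu_ext M v I) f = choquet M (measure (mu_ext M v I)) f"
    using m f bounded by (rule choquet_measure[symmetric])
  also have "\<dots> \<le> choquet M v f"
  proof (rule choquet_mono[OF capacity_measure[OF m] capacity_axioms])
    show "measure (mu_ext M v I) (space M) = v (space M)"
      using measure_mu_ext[OF I Sigma_clsD(4)[OF I]] .
    show "measure (mu_ext M v I) {\<omega>\<in>space M. z < f \<omega>} \<le> v {\<omega>\<in>space M. z < f \<omega>}" for z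
      by (rule measure_mu_ext_le[OF I]) measurable
  qed (use bounded in auto)
  finally show ?thesis .
qed

end

theorem theorem10:
  fixes M :: "'a measure" and v :: "'a set \<Rightarrow> real" and f :: "'a \<Rightarrow> real"
  assumes "Sigma_cls M \<noteq> {}"
    and "\<forall>A\<in>sets M. \<forall>B\<in>sets M. A \<subseteq> B \<longrightarrow> v A \<le> v B"
    and "continuous_sf M v"
    and "\<forall>A\<in>sets M. \<forall>B\<in>sets M. v A + v B \<ge> v (A \<union> B) + v (A \<inter> B)"
    and "v {} = 0"
    and "f \<in> borel_measurable M"
    and "bounded (f ` space M)"
  shows "choquet M v f = (SUP I\<in>Sigma_cls M. integral\<^sup>L (mu_ext M v I) f)"
proof -
  interpret continuous_submodular_capacity M v
    using assms(2-5) by unfold_locales auto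
  have "(SUP I\<in>Sigma_cls M. integral\<^sup>L (mu_ext M v I) f) = choquet M v f"
  proof (rule cSUP_eq_approx)
    show "Sigma_cls M \<noteq> {}" by (fact assms(1))
    show "integral\<^sup>L (mu_ext M v I) f \<le> choquet M v f" if "I \<in> Sigma_cls M" for I
      using that assms(6,7) by (rule integral_mu_ext_le_choquet)
    show "\<exists>I\<in>Sigma_cls M. choquet M v f - e \<le> integral\<^sup>L (mu_ext M v I) f" if "0 < e" for e
    proof -
      define d where "d = e / (v (space M) + 1)"
      have "0 \<le> v (space M)"
        by (simp add: nonneg)
      then have "0 < d" "d * v (space M) \<le> e"
        using \<open>0 < e\<close> by (simp_all add: d_def field_simps)
      then obtain I where "I \<in> Sigma_cls M" "choquet M v f - d * v (space M) \<le> integral\<^sup>L (mu_ext M v I) f"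
        using choquet_le_integral_mu_ext[OF assms(1,6,7)] by blast
      then show ?thesis
        using \<open>d * v (space M) \<le> e\<close> by (intro bexI[of _ I]) auto
    qed
  qed
  then show ?thesis ..
qed

end
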